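(* Let $G=(\mathcal{N},\mathcal{L})$ be a finite undirected graph with distinct non-adjacent vertices $a$ (Alice) and $b$ (Bob). Suppose each edge $e\in\mathcal{L}$ carries a key $k_e\in\{0,1\}^n$, the keys being independent and uniformly distributed. In scheme $\mathcal{M}_0$, every vertex $v\notin\{a,b\}$ publicly announces $p_v=\bigoplus_{e\ni v}k_e$ (XOR over all edges incident to $v$); Alice computes $k_A=\bigoplus_{e\ni a}k_e$; Bob computes $k_B=\big(\bigoplus_{v\notin\{a,b\}}p_v\big)\oplus\big(\bigoplus_{e\ni b}k_e\big)$. Then (i) $k_B=k_A$; and (ii) for an attack $\mathcal{A}\subseteq\mathcal{N}\setminus\{a,b\}$, in which the eavesdropper learns all announced parities $p_v$ and all keys $k_e$ with $e\in\mathcal{L}_A$, the key $k_A$ is uniformly distributed and independent of the eavesdropper's information if $\mathcal{A}$ is not a strongest attack, whereas if $\mathcal{A}$ is a strongest attack the eavesdropper can compute $k_A$. In other words, $\mathcal{M}_0$ has the highest security level: it is insecure exactly against the strongest attacks.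
   Context: $\mathcal{L}_A$ is the set of edges with at least one endpoint in $\mathcal{A}$. A communication scheme $\mathcal{M}$ is a set of simple paths from $a$ to $b$; $sec(\mathcal{A},\mathcal{M})=1$ if some path in $\mathcal{M}$ avoids all vertices of $\mathcal{A}$, else $0$. An attack $\mathcal{A}$ is strongest if $sec(\mathcal{A},\mathcal{M})=0$ for all schemes $\mathcal{M}$; equivalently, there is a vertex partition separating $a$ from $b$ all of whose crossing edges lie in $\mathcal{L}_A$. A scheme has the highest security level if it is secure against exactly the attacks that are not strongest. *)

theory Defs
  imports "HOL-Probability.Probability"
begin

definition graph :: "'v set \<Rightarrow> 'v set set \<Rightarrow> bool" where
  "graph N L \<longleftrightarrow> finite N \<and> (\<forall>e\<in>L. \<exists>u v. e = {u, v} \<and> u \<noteq> v \<and> u \<in> N \<and> v \<in> N)"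

definition incident :: "'v set set \<Rightarrow> 'v \<Rightarrow> 'v set set" where
  "incident L v = {e \<in> L. v \<in> e}"

definition attacked_edges :: "'v set set \<Rightarrow> 'v set \<Rightarrow> 'v set set" where
  "attacked_edges L A = {e \<in> L. e \<inter> A \<noteq> {}}"

definition simple_path :: "'v set set \<Rightarrow> 'v \<Rightarrow> 'v \<Rightarrow> 'v list \<Rightarrow> bool" where
  "simple_path L a b p \<longleftrightarrow> p \<noteq> [] \<and> hd p = a \<and> last p = b \<and> distinct p \<and>
     (\<forall>i. Suc i < length p \<longrightarrow> {p ! i, p ! Suc i} \<in> L)"

definition scheme :: "'v set set \<Rightarrow> 'v \<Rightarrow> 'v \<Rightarrow> 'v list set \<Rightarrow> bool" where
  "scheme L a b M \<longleftrightarrow> (\<forall>p\<in>M. simple_path L a b p)"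

definition sec :: "'v set \<Rightarrow> 'v list set \<Rightarrow> bool" where
  "sec A M \<longleftrightarrow> (\<exists>p\<in>M. set p \<inter> A = {})"

definition strongest_attack :: "'v set set \<Rightarrow> 'v \<Rightarrow> 'v \<Rightarrow> 'v set \<Rightarrow> bool" where
  "strongest_attack L a b A \<longleftrightarrow> (\<forall>M. scheme L a b M \<longrightarrow> \<not> sec A M)"

text \<open>Bit strings of length n are represented as functions nat \<Rightarrow> bool that vanish
at positions \<ge> n.\<close>
definition bitstrings :: "nat \<Rightarrow> (nat \<Rightarrow> bool) set" where
  "bitstrings n = {x. \<forall>i\<ge>n. \<not> x i}"

definition xor2 :: "(nat \<Rightarrow> bool) \<Rightarrow> (nat \<Rightarrow> bool) \<Rightarrow> nat \<Rightarrow> bool" where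
  "xor2 x y = (\<lambda>i. x i \<noteq> y i)"

definition xors :: "'a set \<Rightarrow> ('a \<Rightarrow> nat \<Rightarrow> bool) \<Rightarrow> nat \<Rightarrow> bool" where
  "xors S f = (\<lambda>i. odd (card {x \<in> S. f x i}))"

definition key_space :: "nat \<Rightarrow> 'v set set \<Rightarrow> ('v set \<Rightarrow> nat \<Rightarrow> bool) set" where
  "key_space n L = PiE L (\<lambda>_. bitstrings n)"

definition parity :: "'v set set \<Rightarrow> ('v set \<Rightarrow> nat \<Rightarrow> bool) \<Rightarrow> 'v \<Rightarrow> nat \<Rightarrow> bool" where
  "parity L k v = xors (incident L v) k"

definition key_A :: "'v set set \<Rightarrow> 'v \<Rightarrow> ('v set \<Rightarrow> nat \<Rightarrow> bool) \<Rightarrow> nat \<Rightarrow> bool" where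
  "key_A L a k = xors (incident L a) k"

definition key_B :: "'v set \<Rightarrow> 'v set set \<Rightarrow> 'v \<Rightarrow> 'v \<Rightarrow> ('v set \<Rightarrow> nat \<Rightarrow> bool) \<Rightarrow> nat \<Rightarrow> bool" where
  "key_B N L a b k = xor2 (xors (N - {a, b}) (parity L k)) (xors (incident L b) k)"

definition eve_view :: "'v set \<Rightarrow> 'v set set \<Rightarrow> 'v \<Rightarrow> 'v \<Rightarrow> 'v set \<Rightarrow>
    ('v set \<Rightarrow> nat \<Rightarrow> bool) \<Rightarrow> ('v \<Rightarrow> nat \<Rightarrow> bool) \<times> ('v set \<Rightarrow> nat \<Rightarrow> bool)" where
  "eve_view N L a b A k = (restrict (parity L k) (N - {a, b}), restrict k (attacked_edges L A))"

end

theory Submission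
  imports Defs
begin

text \<open>Bob's key is Alice's by a handshake count: every edge contributes to the XOR of all
inner parities once per inner endpoint, so exactly the edges with one endpoint in \<open>{a, b}\<close>
survive. If some \<open>a\<close>-\<open>b\<close> path avoids \<open>\<A>\<close>, XOR-ing a bit string \<open>x\<close> onto the keys of its edges
is a bijection of the key space that leaves every inner parity and every attacked key unchanged
but replaces \<open>k\<^sub>A\<close> by \<open>k\<^sub>A \<oplus> x\<close>; hence \<open>k\<^sub>A\<close> is uniform and independent of the eavesdropper's view.
If \<open>\<A>\<close> is strongest, let \<open>C\<close> be the set of vertices reachable from \<open>a\<close> without touching \<open>\<A>\<close>. Two
key assignments with the same view differ only on edges avoiding \<open>\<A>\<close>, each of which has zero or
two endpoints in \<open>C\<close>, and they induce the same parity at every vertex of \<open>C - {a}\<close>; the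
handshake count over \<open>C\<close> then forces them to give the same parity at \<open>a\<close>.\<close>

lemma card_filter_insert:
  assumes "finite F" "y \<notin> F"
  shows "card {x \<in> insert y F. P x} = (if P y then Suc (card {x\<in>F. P x}) else card {x\<in>F. P x})"
proof -
  have "{x \<in> insert y F. P x} = (if P y then insert y {x\<in>F. P x} else {x\<in>F. P x})" by auto
  with assms show ?thesis by simp
qed

lemma odd_card_filter_neq:
  assumes "finite S"
  shows "odd (card {x\<in>S. P x \<noteq> Q x}) \<longleftrightarrow> (odd (card {x\<in>S. P x}) \<noteq> odd (card {x\<in>S. Q x}))"
  using assms
proof (induction S rule: finite_induct)
  case (insert y F)
  show ?case
    unfolding card_filter_insert[OF insert(1,2)] using insert by auto
qed simp

lemma odd_sum_iff_odd_card_odd: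
  assumes "finite S"
  shows "odd (sum (f :: _ \<Rightarrow> nat) S) \<longleftrightarrow> odd (card {x\<in>S. odd (f x)})"
  using assms
proof (induction S rule: finite_induct)
  case (insert y F)
  show ?case
    unfolding card_filter_insert[OF insert(1,2)] using insert by auto
qed simp

lemma sum_card_incident_eq_sum_card_inter:
  assumes "finite V" "finite E"
  shows "(\<Sum>v\<in>V. card {e\<in>E. v \<in> e}) = (\<Sum>e\<in>E. card (e \<inter> V))"
proof -
  have "(\<Sum>v\<in>V. card {e\<in>E. v \<in> e}) = (\<Sum>v\<in>V. \<Sum>e\<in>E. if v \<in> e then 1 else 0)"
    using assms by (simp add: sum.inter_filter[symmetric])
  also have "\<dots> = (\<Sum>e\<in>E. \<Sum>v\<in>V. if v \<in> e then 1 else 0)"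
    by (rule sum.swap)
  also have "\<dots> = (\<Sum>e\<in>E. card {v\<in>V. v \<in> e})"
    using assms by (simp add: sum.inter_filter[symmetric])
  also have "\<dots> = (\<Sum>e\<in>E. card (e \<inter> V))"
    by (simp add: Collect_conj_eq Int_commute)
  finally show ?thesis .
qed

lemma odd_card_odd_degree_iff:
  assumes "finite V" "finite E"
  shows "odd (card {v\<in>V. odd (card {e\<in>E. v \<in> e})}) \<longleftrightarrow> odd (card {e\<in>E. odd (card (e \<inter> V))})"
  using odd_sum_iff_odd_card_odd[OF assms(1), of "\<lambda>v. card {e\<in>E. v \<in> e}"]
    odd_sum_iff_odd_card_odd[OF assms(2), of "\<lambda>e. card (e \<inter> V)"]
    sum_card_incident_eq_sum_card_inter[OF assms]
  by simp

lemma even_degree_if_even_cut: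
  assumes "finite C" "finite E" "a \<in> C"
    and cut: "\<And>e. e \<in> E \<Longrightarrow> even (card (e \<inter> C))"
    and inner: "\<And>v. v \<in> C - {a} \<Longrightarrow> even (card {e\<in>E. v \<in> e})"
  shows "even (card {e\<in>E. a \<in> e})"
proof (rule ccontr)
  assume "\<not> even (card {e\<in>E. a \<in> e})"
  with inner assms(3) have "{v\<in>C. odd (card {e\<in>E. v \<in> e})} = {a}" by blast
  then have "odd (card {e\<in>E. odd (card (e \<inter> C))})"
    using odd_card_odd_degree_iff[OF assms(1,2)] by simp
  moreover have "{e\<in>E. odd (card (e \<inter> C))} = {}" using cut by blast
  ultimately show False by (simp only: card.empty) simp
qed

lemma xor2_cancel [simp]: "xor2 (xor2 y x) x = y"
  by (auto simp: xor2_def)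

lemma xor2_in_bitstrings: "y \<in> bitstrings n \<Longrightarrow> x \<in> bitstrings n \<Longrightarrow> xor2 y x \<in> bitstrings n"
  by (auto simp: xor2_def bitstrings_def)

lemma bij_betw_xor2_bitstrings: "y \<in> bitstrings n \<Longrightarrow> bij_betw (xor2 y) (bitstrings n) (bitstrings n)"
  by (rule bij_betw_byWitness[where f'="xor2 y"]) (auto simp: xor2_def bitstrings_def fun_eq_iff)

lemma finite_bitstrings: "finite (bitstrings n)"
proof -
  have "bitstrings n \<subseteq> (\<lambda>S i. i \<in> S) ` Pow {..<n}"
  proof
    fix x assume "x \<in> bitstrings n"
    then have "{i. x i} \<in> Pow {..<n}" by (auto simp: bitstrings_def not_less[symmetric])
    moreover have "x = (\<lambda>i. i \<in> {i. x i})" by simp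
    ultimately show "x \<in> (\<lambda>S i. i \<in> S) ` Pow {..<n}" by blast
  qed
  then show ?thesis by (rule finite_subset) simp
qed

lemma bitstrings_nonempty: "bitstrings n \<noteq> {}"
  by (auto simp: bitstrings_def)

lemma xors_in_bitstrings:
  assumes "\<And>x. x \<in> S \<Longrightarrow> f x \<in> bitstrings n"
  shows "xors S f \<in> bitstrings n"
proof -
  have "\<not> xors S f i" if "i \<ge> n" for i
  proof -
    have empty: "{x\<in>S. f x i} = {}"
      using assms that by (auto simp: bitstrings_def)
    show ?thesis unfolding xors_def empty by simp
  qed
  then show ?thesis by (simp add: bitstrings_def)
qed

definition xor_on :: "'e set \<Rightarrow> (nat \<Rightarrow> bool) \<Rightarrow> ('e \<Rightarrow> nat \<Rightarrow> bool) \<Rightarrow> 'e \<Rightarrow> nat \<Rightarrow> bool" where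
  "xor_on P x k = (\<lambda>e. if e \<in> P then xor2 (k e) x else k e)"

lemma xors_xor_on:
  assumes "finite S"
  shows "xors S (xor_on P x k) i \<longleftrightarrow> (xors S k i \<noteq> (x i \<and> odd (card (S \<inter> P))))"
proof -
  have "{e\<in>S. xor_on P x k e i} = {e\<in>S. k e i \<noteq> (e \<in> P \<and> x i)}"
    by (auto simp: xor_on_def xor2_def)
  moreover have "{e\<in>S. e \<in> P \<and> x i} = (if x i then S \<inter> P else {})"
    by auto
  ultimately show ?thesis
    using odd_card_filter_neq[OF assms, of "\<lambda>e. k e i" "\<lambda>e. e \<in> P \<and> x i"]
    by (cases "x i") (simp_all add: xors_def)
qed

text \<open>Averaging the joint law over the translations \<open>(y, w) \<mapsto> (y \<oplus> x, w)\<close>, which all fix it,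
turns its first coordinate into an independent uniform one.\<close>

lemma uniform_independent_if_translation_invariant:
  fixes K :: "'k set" and view :: "'k \<Rightarrow> 'w"
  assumes K: "finite K" "K \<noteq> {}"
    and bij: "\<And>x. x \<in> bitstrings n \<Longrightarrow> bij_betw (s x) K K"
    and view: "\<And>x k. x \<in> bitstrings n \<Longrightarrow> k \<in> K \<Longrightarrow> view (s x k) = view k"
    and key: "\<And>x k. x \<in> bitstrings n \<Longrightarrow> k \<in> K \<Longrightarrow> key (s x k) = xor2 (key k) x"
    and key_bits: "\<And>k. k \<in> K \<Longrightarrow> key k \<in> bitstrings n"
  shows "map_pmf (\<lambda>k. (key k, view k)) (pmf_of_set K) =
    pair_pmf (pmf_of_set (bitstrings n)) (map_pmf view (pmf_of_set K))"
proof -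
  define B where "B = bitstrings n"
  have B: "finite B" "B \<noteq> {}"
    by (simp_all add: B_def finite_bitstrings bitstrings_nonempty)
  define D where "D = map_pmf (\<lambda>k. (key k, view k)) (pmf_of_set K)"
  define \<tau> where "\<tau> = (\<lambda>x (y :: nat \<Rightarrow> bool, w :: 'w). (xor2 y x, w))"
  have invariant: "map_pmf (\<tau> x) D = D" if x: "x \<in> B" for x
  proof -
    have "map_pmf (\<tau> x) D = map_pmf (\<lambda>k. (key k, view k)) (map_pmf (s x) (pmf_of_set K))"
      unfolding D_def map_pmf_comp
      using view key x K by (intro map_pmf_cong) (auto simp: \<tau>_def B_def)
    also have "map_pmf (s x) (pmf_of_set K) = pmf_of_set K"
      using bij x K by (intro map_pmf_of_set_bij_betw) (auto simp: B_def)
    finally show ?thesis unfolding D_def .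
  qed
  have uniform_translate: "map_pmf (\<lambda>x. \<tau> x z) (pmf_of_set B) = map_pmf (\<lambda>u. (u, snd z)) (pmf_of_set B)"
    if "z \<in> set_pmf D" for z
  proof -
    from that K obtain k where k: "k \<in> K" "z = (key k, view k)" by (auto simp: D_def)
    have "map_pmf (xor2 (key k)) (pmf_of_set B) = pmf_of_set B"
      using B bij_betw_xor2_bitstrings[OF key_bits[OF k(1)]]
      by (intro map_pmf_of_set_bij_betw) (auto simp: B_def)
    then show ?thesis
      using map_pmf_comp[of "\<lambda>u. (u, snd z)" "xor2 (key k)" "pmf_of_set B"]
      by (simp add: k \<tau>_def)
  qed
  have "D = bind_pmf (pmf_of_set B) (\<lambda>x. D)"
    by simp
  also have "\<dots> = bind_pmf (pmf_of_set B) (\<lambda>x. map_pmf (\<tau> x) D)"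
    using B by (intro bind_pmf_cong) (auto simp: invariant)
  also have "\<dots> = bind_pmf D (\<lambda>z. map_pmf (\<lambda>x. \<tau> x z) (pmf_of_set B))"
    unfolding map_pmf_def by (rule bind_commute_pmf)
  also have "\<dots> = bind_pmf D (\<lambda>z. map_pmf (\<lambda>u. (u, snd z)) (pmf_of_set B))"
    by (intro bind_pmf_cong refl uniform_translate)
  also have "\<dots> = bind_pmf (map_pmf snd D) (\<lambda>w. map_pmf (\<lambda>u. (u, w)) (pmf_of_set B))"
    by (simp add: bind_map_pmf)
  also have "\<dots> = pair_pmf (pmf_of_set B) (map_pmf snd D)"
    unfolding pair_pmf_def map_pmf_def by (rule bind_commute_pmf)
  finally show ?thesis
    by (simp add: D_def B_def map_pmf_comp)
qed

lemma graph_edge_subset: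
  assumes "graph N L" "e \<in> L"
  shows "e \<subseteq> N"
proof -
  obtain u w where "e = {u, w}" "u \<in> N" "w \<in> N"
    using assms unfolding graph_def by blast
  then show ?thesis by simp
qed

lemma graph_finite_edges:
  assumes "graph N L"
  shows "finite L"
proof (rule finite_subset)
  show "L \<subseteq> Pow N" using graph_edge_subset[OF assms] by blast
  show "finite (Pow N)" using assms by (simp add: graph_def)
qed

lemma odd_card_edge_inter_inner:
  assumes "graph N L" "a \<noteq> b" "{a, b} \<notin> L" "e \<in> L"
  shows "odd (card (e \<inter> (N - {a, b}))) \<longleftrightarrow> (a \<in> e) \<noteq> (b \<in> e)"
proof -
  obtain u w where e: "e = {u, w}" "u \<noteq> w" "u \<in> N" "w \<in> N"
    using assms(1,4) by (auto simp: graph_def)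
  moreover have "e \<noteq> {a, b}" using assms(3,4) by auto
  moreover have "e \<inter> (N - {a, b}) = e - {a, b}" using e by auto
  ultimately show ?thesis using assms(2)
    by (cases "u = a"; cases "u = b"; cases "w = a"; cases "w = b") (simp_all add: insert_commute)
qed

lemma key_B_eq_key_A:
  assumes g: "graph N L" and "a \<noteq> b" "{a, b} \<notin> L"
  shows "key_B N L a b k = key_A L a k"
proof
  fix i
  define I where "I = N - {a, b}"
  define E where "E = {e\<in>L. k e i}"
  have fin: "finite I" "finite E"
    using g graph_finite_edges[OF g] by (auto simp: graph_def I_def E_def)
  have incident: "{e\<in>incident L v. k e i} = {e\<in>E. v \<in> e}" for v
    by (auto simp: incident_def E_def)
  have degree: "xors (incident L v) k i \<longleftrightarrow> odd (card {e\<in>E. v \<in> e})" for v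
    by (simp only: xors_def incident)
  have "xors I (parity L k) i \<longleftrightarrow> odd (card {v\<in>I. odd (card {e\<in>E. v \<in> e})})"
    by (simp only: xors_def parity_def incident)
  also have "\<dots> \<longleftrightarrow> odd (card {e\<in>E. odd (card (e \<inter> I))})"
    by (rule odd_card_odd_degree_iff[OF fin])
  also have "{e\<in>E. odd (card (e \<inter> I))} = {e\<in>E. (a \<in> e) \<noteq> (b \<in> e)}"
    using odd_card_edge_inter_inner[OF assms] by (auto simp: I_def E_def)
  also have "odd (card \<dots>) \<longleftrightarrow> (odd (card {e\<in>E. a \<in> e}) \<noteq> odd (card {e\<in>E. b \<in> e}))"
    by (rule odd_card_filter_neq[OF fin(2)])
  finally show "key_B N L a b k i = key_A L a k i"
    unfolding key_B_def key_A_def xor2_def I_def[symmetric] degree by blast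
qed

lemma key_A_uniform_independent_if_flippable:
  assumes g: "graph N L" and P: "P \<subseteq> L" "P \<inter> attacked_edges L A = {}"
    and inner: "\<And>v. v \<in> N - {a, b} \<Longrightarrow> even (card {e\<in>P. v \<in> e})"
    and start: "odd (card {e\<in>P. a \<in> e})"
  shows "map_pmf (\<lambda>k. (key_A L a k, eve_view N L a b A k)) (pmf_of_set (key_space n L)) =
    pair_pmf (pmf_of_set (bitstrings n)) (map_pmf (eve_view N L a b A) (pmf_of_set (key_space n L)))"
proof (rule uniform_independent_if_translation_invariant[where s = "xor_on P"])
  have fin: "finite L" "finite (incident L v)" for v
    using graph_finite_edges[OF g] by (auto simp: incident_def)
  have incident_P: "incident L v \<inter> P = {e\<in>P. v \<in> e}" for v
    using P(1) by (auto simp: incident_def)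
  show "finite (key_space n L)" "key_space n L \<noteq> {}"
    using fin finite_bitstrings bitstrings_nonempty
    by (auto simp: key_space_def finite_PiE PiE_eq_empty_iff)
  show "key_A L a k \<in> bitstrings n" if "k \<in> key_space n L" for k
    using that unfolding key_A_def
    by (intro xors_in_bitstrings) (auto simp: key_space_def incident_def)
  fix x assume x: "x \<in> bitstrings n"
  have into: "xor_on P x k \<in> key_space n L" if "k \<in> key_space n L" for k
    using that x P(1) unfolding key_space_def PiE_iff
    by (auto simp: xor_on_def xor2_in_bitstrings extensional_def)
  show "bij_betw (xor_on P x) (key_space n L) (key_space n L)"
    by (rule bij_betw_byWitness[where f'="xor_on P x"])
      (auto simp: into, auto simp: xor_on_def fun_eq_iff)
  fix k
  show "key_A L a (xor_on P x k) = xor2 (key_A L a k) x"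
    using start by (auto simp: key_A_def xor2_def xors_xor_on[OF fin(2)] incident_P)
  have "parity L (xor_on P x k) v = parity L k v" if "v \<in> N - {a, b}" for v
    using inner[OF that] by (auto simp: parity_def xors_xor_on[OF fin(2)] incident_P)
  moreover have "restrict (xor_on P x k) (attacked_edges L A) = restrict k (attacked_edges L A)"
    using P(2) by (intro restrict_ext) (auto simp: xor_on_def)
  ultimately show "eve_view N L a b A (xor_on P x k) = eve_view N L a b A k"
    unfolding eve_view_def by (metis (no_types, lifting) restrict_ext)
qed

definition path_edges :: "'v list \<Rightarrow> 'v set set" where
  "path_edges p = (\<lambda>j. {p ! j, p ! Suc j}) ` {j. Suc j < length p}"

lemma path_edges_subset: "simple_path L a b p \<Longrightarrow> path_edges p \<subseteq> L"
  by (auto simp: path_edges_def simple_path_def)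

lemma path_edges_disjoint_attacked: "set p \<inter> A = {} \<Longrightarrow> path_edges p \<inter> attacked_edges L A = {}"
  by (auto simp: path_edges_def attacked_edges_def) (meson Suc_lessD disjoint_iff nth_mem)+

lemma path_edges_containing_nth:
  assumes "distinct p" "m < length p"
  shows "{e\<in>path_edges p. p ! m \<in> e} =
    (\<lambda>j. {p ! j, p ! Suc j}) ` {j. Suc j < length p \<and> (j = m \<or> Suc j = m)}"
  using assms nth_eq_iff_index_eq[OF assms(1)]
  by (auto simp: path_edges_def)

lemma card_path_edges_start:
  assumes sp: "simple_path L a b p" and "a \<noteq> b"
  shows "card {e\<in>path_edges p. a \<in> e} = 1"
proof -
  have "p \<noteq> []" "distinct p" "hd p = a" "last p = b"
    using sp by (auto simp: simple_path_def)
  moreover from this have "Suc 0 < length p"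
    using assms(2) by (cases p) (auto split: if_splits)
  moreover from this have "{j. Suc j < length p \<and> (j = 0 \<or> Suc j = 0)} = {0}" by auto
  ultimately show ?thesis
    using path_edges_containing_nth[of p 0] by (simp add: hd_conv_nth)
qed

lemma card_path_edges_inner:
  assumes sp: "simple_path L a b p" and v: "v \<in> set p" "v \<noteq> a" "v \<noteq> b"
  shows "card {e\<in>path_edges p. v \<in> e} = 2"
proof -
  have d: "distinct p" and ne: "p \<noteq> []" using sp by (auto simp: simple_path_def)
  obtain m where m: "m < length p" "p ! m = v" using v(1) by (auto simp: in_set_conv_nth)
  have "m \<noteq> 0"
  proof
    assume "m = 0"
    with m v sp ne show False by (auto simp: simple_path_def hd_conv_nth)
  qed
  moreover have "m \<noteq> length p - 1"
  proof
    assume "m = length p - 1"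
    with m v sp ne show False by (auto simp: simple_path_def last_conv_nth)
  qed
  ultimately obtain m' where m': "m = Suc m'" "Suc m < length p"
    using m(1) by (cases m) auto
  have "{j. Suc j < length p \<and> (j = m \<or> Suc j = m)} = {m', m}" using m' by auto
  then have "{e\<in>path_edges p. v \<in> e} = {{p ! m', p ! m}, {p ! m, p ! Suc m}}"
    using path_edges_containing_nth[OF d m(1)] m(2) m'(1) by simp
  moreover have "p ! m' \<noteq> p ! m" "p ! m' \<noteq> p ! Suc m"
    using d m' by (simp_all add: nth_eq_iff_index_eq)
  ultimately show ?thesis by (simp add: doubleton_eq_iff)
qed

lemma key_A_uniform_independent_if_not_strongest:
  assumes g: "graph N L" and "a \<noteq> b" and "\<not> strongest_attack L a b A"
  shows "map_pmf (\<lambda>k. (key_A L a k, eve_view N L a b A k)) (pmf_of_set (key_space n L)) =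
    pair_pmf (pmf_of_set (bitstrings n)) (map_pmf (eve_view N L a b A) (pmf_of_set (key_space n L)))"
proof -
  from assms(3) obtain p where sp: "simple_path L a b p" and avoid: "set p \<inter> A = {}"
    by (auto simp: strongest_attack_def scheme_def sec_def)
  have "even (card {e\<in>path_edges p. v \<in> e})" if "v \<in> N - {a, b}" for v
  proof (cases "v \<in> set p")
    case True
    with that show ?thesis using card_path_edges_inner[OF sp] by simp
  next
    case False
    then have empty: "{e\<in>path_edges p. v \<in> e} = {}" by (auto simp: path_edges_def)
    show ?thesis unfolding empty by simp
  qed
  then show ?thesis
    using card_path_edges_start[OF sp assms(2)]
    by (intro key_A_uniform_independent_if_flippable[OF g path_edges_subset[OF sp]
          path_edges_disjoint_attacked[OF avoid]]) simp_all
qed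

definition avoiding_edge :: "'v set set \<Rightarrow> 'v set \<Rightarrow> ('v \<times> 'v) set" where
  "avoiding_edge L A = {(u, w). {u, w} \<in> L \<and> u \<notin> A \<and> w \<notin> A}"

lemma simple_path_snoc:
  assumes "simple_path L a y p" "{y, z} \<in> L" "z \<notin> set p"
  shows "simple_path L a z (p @ [z])"
  unfolding simple_path_def
proof (intro conjI allI impI)
  have ne: "p \<noteq> []" and last: "p ! (length p - 1) = y"
    using assms(1) by (auto simp: simple_path_def last_conv_nth)
  show "p @ [z] \<noteq> []" "last (p @ [z]) = z" by simp_all
  show "hd (p @ [z]) = a" "distinct (p @ [z])"
    using assms ne by (auto simp: simple_path_def)
  fix i assume i: "Suc i < length (p @ [z])"
  show "{(p @ [z]) ! i, (p @ [z]) ! Suc i} \<in> L"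
  proof (cases "Suc i < length p")
    case True
    with assms(1) show ?thesis by (simp add: simple_path_def nth_append)
  next
    case False
    with i have "i = length p - 1" "Suc i = length p" by auto
    with assms(2) ne last show ?thesis by (simp add: nth_append)
  qed
qed

lemma simple_path_take:
  assumes "simple_path L a y p" "j < length p"
  shows "simple_path L a (p ! j) (take (Suc j) p)"
  using assms by (auto simp: simple_path_def last_conv_nth)

lemma simple_path_if_avoiding_reachable:
  assumes "(a, v) \<in> (avoiding_edge L A)\<^sup>*" "a \<notin> A"
  shows "\<exists>p. simple_path L a v p \<and> set p \<inter> A = {}"
  using assms(1)
proof (induction rule: rtrancl_induct)
  case base
  show ?case using assms(2) by (intro exI[of _ "[a]"]) (auto simp: simple_path_def)
next
  case (step y z)
  then obtain p where p: "simple_path L a y p" "set p \<inter> A = {}" by blast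
  have yz: "{y, z} \<in> L" "z \<notin> A" using step.hyps(2) by (auto simp: avoiding_edge_def)
  show ?case
  proof (cases "z \<in> set p")
    case True
    then obtain j where j: "j < length p" "p ! j = z" by (auto simp: in_set_conv_nth)
    have "simple_path L a z (take (Suc j) p)"
      using simple_path_take[OF p(1) j(1)] j(2) by simp
    moreover have "set (take (Suc j) p) \<inter> A = {}"
      using p(2) set_take_subset[of "Suc j" p] by blast
    ultimately show ?thesis by blast
  next
    case False
    with p yz show ?thesis
      by (intro exI[of _ "p @ [z]"]) (auto simp: simple_path_snoc)
  qed
qed

lemma even_card_inter_avoiding_component:
  assumes g: "graph N L" and e: "e \<in> L" "e \<inter> A = {}"
  shows "even (card (e \<inter> (avoiding_edge L A)\<^sup>* `` {a}))"
proof -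
  obtain u w where uw: "e = {u, w}" "u \<noteq> w" using g e by (auto simp: graph_def)
  have "(u, w) \<in> avoiding_edge L A" "(w, u) \<in> avoiding_edge L A"
    using e uw by (auto simp: avoiding_edge_def insert_commute)
  then have "e \<inter> (avoiding_edge L A)\<^sup>* `` {a} = {} \<or> e \<inter> (avoiding_edge L A)\<^sup>* `` {a} = e"
    using uw by (auto intro: rtrancl_into_rtrancl)
  then show ?thesis using uw by auto
qed

lemma key_A_eq_if_same_view:
  assumes g: "graph N L" and "a \<in> N" and A: "A \<subseteq> N - {a, b}"
    and st: "strongest_attack L a b A"
    and view: "eve_view N L a b A k = eve_view N L a b A k'"
  shows "key_A L a k = key_A L a k'"
proof
  fix i
  define E where "E = {e\<in>L. k e i \<noteq> k' e i}"
  define C where "C = (avoiding_edge L A)\<^sup>* `` {a}"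
  have finE: "finite E" using graph_finite_edges[OF g] by (simp add: E_def)
  have degree: "odd (card {e\<in>E. v \<in> e}) \<longleftrightarrow> (xors (incident L v) k i \<noteq> xors (incident L v) k' i)" for v
  proof -
    have "{e\<in>incident L v. k e i \<noteq> k' e i} = {e\<in>E. v \<in> e}"
      by (auto simp: incident_def E_def)
    moreover have "finite (incident L v)"
      using graph_finite_edges[OF g] by (simp add: incident_def)
    ultimately show ?thesis
      using odd_card_filter_neq[of "incident L v" "\<lambda>e. k e i" "\<lambda>e. k' e i"] by (simp add: xors_def)
  qed
  have inner: "even (card {e\<in>E. v \<in> e})" if "v \<in> N - {a, b}" for v
  proof -
    have "restrict (parity L k) (N - {a, b}) v = restrict (parity L k') (N - {a, b}) v"
      using view by (simp add: eve_view_def)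
    with that have "parity L k v = parity L k' v" by simp
    then show ?thesis using degree[of v] by (simp add: parity_def)
  qed
  have unattacked: "e \<inter> A = {}" if "e \<in> E" for e
  proof (rule ccontr)
    assume "e \<inter> A \<noteq> {}"
    with that have "e \<in> attacked_edges L A" by (simp add: attacked_edges_def E_def)
    moreover have "restrict k (attacked_edges L A) e = restrict k' (attacked_edges L A) e"
      using view by (simp add: eve_view_def)
    ultimately show False using that by (simp add: E_def)
  qed
  have range: "Range (avoiding_edge L A) \<subseteq> N"
    using graph_edge_subset[OF g] by (auto simp: avoiding_edge_def)
  have CN: "C \<subseteq> N"
  proof
    fix v assume "v \<in> C"
    then have "(a, v) \<in> (avoiding_edge L A)\<^sup>*" by (simp add: C_def)
    then show "v \<in> N"
      by (cases rule: rtranclE) (use \<open>a \<in> N\<close> range in auto)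
  qed
  have "b \<notin> C"
  proof
    assume "b \<in> C"
    then have "(a, b) \<in> (avoiding_edge L A)\<^sup>*" by (simp add: C_def)
    moreover have "a \<notin> A" using A by auto
    ultimately obtain p where "simple_path L a b p" "set p \<inter> A = {}"
      by (blast dest: simple_path_if_avoiding_reachable)
    then have "scheme L a b {p}" "sec A {p}" by (auto simp: scheme_def sec_def)
    with st show False by (auto simp: strongest_attack_def)
  qed
  have "even (card {e\<in>E. a \<in> e})"
  proof (rule even_degree_if_even_cut[OF _ finE])
    show "finite C" using finite_subset[OF CN] g by (simp add: graph_def)
    show "a \<in> C" by (simp add: C_def)
    show "even (card (e \<inter> C))" if "e \<in> E" for e
      using that unattacked[OF that] unfolding C_def E_def
      by (intro even_card_inter_avoiding_component[OF g]) simp_all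
    show "even (card {e\<in>E. v \<in> e})" if "v \<in> C - {a}" for v
      using that CN \<open>b \<notin> C\<close> by (intro inner) auto
  qed
  then show "key_A L a k i = key_A L a k' i"
    using degree[of a] by (simp add: key_A_def)
qed

lemma key_A_computable_if_strongest:
  assumes "graph N L" "a \<in> N" "A \<subseteq> N - {a, b}" "strongest_attack L a b A"
  shows "\<exists>g. \<forall>k. g (eve_view N L a b A k) = key_A L a k"
proof -
  let ?view = "eve_view N L a b A"
  have "key_A L a (SOME k'. ?view k' = ?view k) = key_A L a k" for k
  proof (rule someI2[where a = k])
    show "?view k = ?view k" ..
    show "key_A L a k' = key_A L a k" if "?view k' = ?view k" for k'
      using key_A_eq_if_same_view[OF assms that] .
  qed
  then show ?thesis
    by (intro exI[of _ "\<lambda>w. key_A L a (SOME k'. ?view k' = w)"]) simp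
qed

theorem theorem2:
  fixes N :: "'v set" and L :: "'v set set" and a b :: 'v and n :: nat
  assumes "graph N L" and "a \<in> N" and "b \<in> N" and "a \<noteq> b" and "{a, b} \<notin> L"
  shows "(\<forall>k\<in>key_space n L. key_B N L a b k = key_A L a k) \<and>
    (\<forall>A. A \<subseteq> N - {a, b} \<longrightarrow>
      (\<not> strongest_attack L a b A \<longrightarrow>
         map_pmf (\<lambda>k. (key_A L a k, eve_view N L a b A k)) (pmf_of_set (key_space n L)) =
         pair_pmf (pmf_of_set (bitstrings n))
                  (map_pmf (eve_view N L a b A) (pmf_of_set (key_space n L)))) \<and>
      (strongest_attack L a b A \<longrightarrow>
         (\<exists>g. \<forall>k\<in>key_space n L. g (eve_view N L a b A k) = key_A L a k)))"
proof (intro conjI ballI allI impI)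
  show "key_B N L a b k = key_A L a k" for k
    using key_B_eq_key_A[OF assms(1,4,5)] .
  fix A assume A: "A \<subseteq> N - {a, b}"
  show "map_pmf (\<lambda>k. (key_A L a k, eve_view N L a b A k)) (pmf_of_set (key_space n L)) =
      pair_pmf (pmf_of_set (bitstrings n)) (map_pmf (eve_view N L a b A) (pmf_of_set (key_space n L)))"
    if "\<not> strongest_attack L a b A"
    using key_A_uniform_independent_if_not_strongest[OF assms(1,4) that] .
  show "\<exists>g. \<forall>k\<in>key_space n L. g (eve_view N L a b A k) = key_A L a k"
    if "strongest_attack L a b A"
    using key_A_computable_if_strongest[OF assms(1,2) A that] by blast
qed

end
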